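(* Let $A\in\mathsf{FOR}^\ast$. There exists $\varphi\in\mathsf{FOR}$ such that $\models_{\mathsf{CPL}}A\leftrightarrow St(\varphi)$ if and only if $A$ is $\mathsf{S}$-set invariant.
   Context: Language: propositional letters $\Phi=\{p_0,p_1,p_2,\dots\}$; unary connective $\neg$; binary connectives $\lor,\wedge,\to,\leftrightarrow,\vartriangle,\looparrowright$; $\mathsf{FOR}$ is the set of all formulas built freely from $\Phi$. An Epstein model is a pair $\mathfrak{M}=\langle v,\mathfrak{R}\rangle$ with $v:\Phi\to\{0,1\}$ and $\mathfrak{R}\subseteq\mathsf{FOR}\times\mathsf{FOR}$. Truth $\mathfrak{M}\vDash\varphi$: $\mathfrak{M}\vDash p$ iff $v(p)=1$; boolean connectives classical; $\mathfrak{M}\vDash\varphi\vartriangle\psi$ iff $\mathfrak{M}\vDash\varphi$, $\mathfrak{M}\vDash\psi$ and $\langle\varphi,\psi\rangle\in\mathfrak{R}$; $\mathfrak{M}\vDash\varphi\looparrowright\psi$ iff ($\mathfrak{M}\nvDash\varphi$ or $\mathfrak{M}\vDash\psi$) and $\langle\varphi,\psi\rangle\in\mathfrak{R}$. $\Omega^{\mathfrak{M}}=\{\langle\varphi,\psi\rangle:\mathfrak{M}\nvDash\varphi\to\psi\}$ and $\mathsf{S}^{\mathfrak{M}}=\{\langle v',\mathfrak{R}'\rangle: v'=v,\ \mathfrak{R}\setminus\Omega^{\mathfrak{M}}\subseteq\mathfrak{R}'\subseteq\mathfrak{R}\cup\Omega^{\mathfrak{M}}\}$. Classical language: $\mathsf{At}=\Phi\cup\{p_{\langle\varphi,\psi\rangle}:\varphi,\psi\in\mathsf{FOR}\}$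 (new distinct atoms indexed by pairs of formulas); $\mathsf{FOR}^\ast$ is the set of classical propositional formulas over $\mathsf{At}$ with connectives $\neg,\wedge,\lor,\to,\leftrightarrow$. An Epstein model $\mathfrak{M}=\langle v,\mathfrak{R}\rangle$ is read as a classical valuation of $\mathsf{At}$: $\mathfrak{M}\models_{\mathsf{CPL}}p_n$ iff $v(p_n)=1$, and $\mathfrak{M}\models_{\mathsf{CPL}}p_{\langle\varphi,\psi\rangle}$ iff $\langle\varphi,\psi\rangle\in\mathfrak{R}$, extended classically. $\models_{\mathsf{CPL}}A$ means $\mathfrak{M}\models_{\mathsf{CPL}}A$ for all Epstein models $\mathfrak{M}$. Standard translation $St:\mathsf{FOR}\to\mathsf{FOR}^\ast$: $St(p_n)=p_n$; $St(\neg\varphi)=\neg St(\varphi)$; $St(\varphi\ast\psi)=St(\varphi)\ast St(\psi)$ for $\ast\in\{\lor,\wedge,\to,\leftrightarrow\}$; $St(\varphi\looparrowright\psi)=St(\varphi\to\psi)\wedge p_{\langle\varphi,\psi\rangle}$; $St(\varphi\vartriangle\psi)=St(\varphi\wedge\psi)\wedge p_{\langle\varphi,\psi\rangle}$. A formula $A\in\mathsf{FOR}^\ast$ is $\mathsf{S}$-set invariant iff for all Epstein models $\mathfrak{M},\mathfrak{N}$: if $\mathfrak{M}\models_{\mathsf{CPL}}A$ and $\mathfrak{N}\in\mathsf{S}^{\mathfrak{M}}$ then $\mathfrak{N}\models_{\mathsf{CPL}}A$. *)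

theory Defs
  imports Main
begin

text \<open>Epstein language FOR: letters p_n (n :: nat), negation, the boolean binary
connectives, and the two relatedness connectives (triangle = Tri, looparrowright = Rel).\<close>
datatype form =
    Var nat
  | Neg form
  | Disj form form
  | Conj form form
  | Imp form form
  | Iff form form
  | Tri form form
  | Rel form form

type_synonym emodel = "(nat \<Rightarrow> bool) \<times> (form \<times> form) set"

fun etrue :: "emodel \<Rightarrow> form \<Rightarrow> bool" where
  "etrue M (Var n) = fst M n"
| "etrue M (Neg a) = (\<not> etrue M a)"
| "etrue M (Disj a b) = (etrue M a \<or> etrue M b)"
| "etrue M (Conj a b) = (etrue M a \<and> etrue M b)"
| "etrue M (Imp a b) = (etrue M a \<longrightarrow> etrue M b)"
| "etrue M (Iff a b) = (etrue M a \<longleftrightarrow> etrue M b)"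
| "etrue M (Tri a b) = (etrue M a \<and> etrue M b \<and> (a, b) \<in> snd M)"
| "etrue M (Rel a b) = ((\<not> etrue M a \<or> etrue M b) \<and> (a, b) \<in> snd M)"

definition Omega :: "emodel \<Rightarrow> (form \<times> form) set" where
  "Omega M = {(a, b). \<not> etrue M (Imp a b)}"

definition Sset :: "emodel \<Rightarrow> emodel set" where
  "Sset M = {N. fst N = fst M \<and> snd M - Omega M \<subseteq> snd N \<and> snd N \<subseteq> snd M \<union> Omega M}"

datatype atom = PAt nat | PairAt form form

datatype cform =
    CAt atom
  | CNeg cform
  | CConj cform cform
  | CDisj cform cform
  | CImp cform cform
  | CIff cform cform

fun ctrue :: "emodel \<Rightarrow> cform \<Rightarrow> bool" where
  "ctrue M (CAt (PAt n)) = fst M n"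
| "ctrue M (CAt (PairAt a b)) = ((a, b) \<in> snd M)"
| "ctrue M (CNeg A) = (\<not> ctrue M A)"
| "ctrue M (CConj A B) = (ctrue M A \<and> ctrue M B)"
| "ctrue M (CDisj A B) = (ctrue M A \<or> ctrue M B)"
| "ctrue M (CImp A B) = (ctrue M A \<longrightarrow> ctrue M B)"
| "ctrue M (CIff A B) = (ctrue M A \<longleftrightarrow> ctrue M B)"

definition cvalid :: "cform \<Rightarrow> bool" where
  "cvalid A = (\<forall>M. ctrue M A)"

text \<open>St(phi looparrowright psi) = St(phi -> psi) /\ p_<phi,psi>, with St(phi -> psi) unfolded.\<close>
fun St :: "form \<Rightarrow> cform" where
  "St (Var n) = CAt (PAt n)"
| "St (Neg a) = CNeg (St a)"
| "St (Disj a b) = CDisj (St a) (St b)"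
| "St (Conj a b) = CConj (St a) (St b)"
| "St (Imp a b) = CImp (St a) (St b)"
| "St (Iff a b) = CIff (St a) (St b)"
| "St (Rel a b) = CConj (CImp (St a) (St b)) (CAt (PairAt a b))"
| "St (Tri a b) = CConj (CConj (St a) (St b)) (CAt (PairAt a b))"

definition S_invariant :: "cform \<Rightarrow> bool" where
  "S_invariant A = (\<forall>M N. ctrue M A \<longrightarrow> N \<in> Sset M \<longrightarrow> ctrue N A)"

end

theory Submission
  imports Defs
begin

text \<open>Epstein truth is constant on an S-set: adding or removing pairs of \<open>\<Omega>\<close> only
  changes the relatedness of pairs whose material implication fails, and for those both
  \<open>\<phi> \<looparrowright> \<psi>\<close> and \<open>\<phi> \<vartriangle> \<psi>\<close> are false anyway. Hence every \<open>St(\<phi>)\<close>, and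
  everything classically equivalent to it, is S-set invariant. Conversely, replace each atom
  \<open>p\<^sub>\<langle>\<phi>,\<psi>\<rangle>\<close> of \<open>A\<close> by \<open>\<phi> \<looparrowright> \<psi>\<close>: in \<open>M\<close> this formula evaluates like
  \<open>A\<close> in the reduct of \<open>M\<close> with \<open>\<Omega>\<^sup>M\<close> removed from the relation, and since
  \<open>M\<close> and its reduct lie in each other's S-sets, invariance makes \<open>A\<close> take the same
  value in both.\<close>

lemma ctrue_St: "ctrue M (St \<phi>) = etrue M \<phi>"
  by (induction \<phi>) auto

lemma etrue_Sset: "N \<in> Sset M \<Longrightarrow> etrue N \<phi> = etrue M \<phi>"
  by (induction \<phi>) (auto simp: Sset_def Omega_def)

lemma Omega_Sset: "N \<in> Sset M \<Longrightarrow> Omega N = Omega M"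
  by (simp add: Omega_def etrue_Sset)

lemma S_invariant_St: "S_invariant (St \<phi>)"
  by (simp add: S_invariant_def ctrue_St etrue_Sset)

definition reduct :: "emodel \<Rightarrow> emodel" where
  "reduct M = (fst M, snd M - Omega M)"

lemma reduct_in_Sset: "reduct M \<in> Sset M"
  by (auto simp: reduct_def Sset_def)

lemma in_Sset_reduct: "M \<in> Sset (reduct M)"
  using Omega_Sset [OF reduct_in_Sset] by (auto simp: reduct_def Sset_def)

lemma S_invariant_reduct: "S_invariant A \<Longrightarrow> ctrue (reduct M) A = ctrue M A"
  using reduct_in_Sset in_Sset_reduct unfolding S_invariant_def by blast

fun rel_form :: "cform \<Rightarrow> form" where
  "rel_form (CAt (PAt n)) = Var n"
| "rel_form (CAt (PairAt \<phi> \<psi>)) = Rel \<phi> \<psi>"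
| "rel_form (CNeg A) = Neg (rel_form A)"
| "rel_form (CConj A B) = Conj (rel_form A) (rel_form B)"
| "rel_form (CDisj A B) = Disj (rel_form A) (rel_form B)"
| "rel_form (CImp A B) = Imp (rel_form A) (rel_form B)"
| "rel_form (CIff A B) = Iff (rel_form A) (rel_form B)"

lemma etrue_rel_form: "etrue M (rel_form A) = ctrue (reduct M) A"
proof (induction A)
  case (CAt x)
  then show ?case by (cases x) (auto simp: reduct_def Omega_def)
qed (auto simp: reduct_def)

lemma cvalid_CIff: "cvalid (CIff A B) \<longleftrightarrow> (\<forall>M. ctrue M A = ctrue M B)"
  by (simp add: cvalid_def)

lemma S_invariant_equiv:
  assumes "S_invariant B" and "\<And>M. ctrue M A = ctrue M B"
  shows "S_invariant A"
  using assms by (simp add: S_invariant_def)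

theorem mainTheorem2:
  fixes A :: cform
  shows "(\<exists>\<phi>. cvalid (CIff A (St \<phi>))) \<longleftrightarrow> S_invariant A"
proof
  assume "\<exists>\<phi>. cvalid (CIff A (St \<phi>))"
  then obtain \<phi> where "\<And>M. ctrue M A = ctrue M (St \<phi>)"
    by (auto simp: cvalid_CIff)
  then show "S_invariant A"
    using S_invariant_St S_invariant_equiv by blast
next
  assume "S_invariant A"
  then have "cvalid (CIff A (St (rel_form A)))"
    by (simp add: cvalid_CIff ctrue_St etrue_rel_form S_invariant_reduct)
  then show "\<exists>\<phi>. cvalid (CIff A (St \<phi>))" ..
qed

end
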